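(* Let $M=(S,\mathrm{Act},P)$ be an MDP, $T\subseteq S$, $\mathrm{rew}\colon S\to\mathbb{R}_{\ge0}$. Let $(x,r)\in[0,\infty]^S\times\mathbb{N}_\infty^S$ satisfy: (1) $D^{\min,\mathrm{rew}}_x(r)\le r$; (2) $E^{\min}(x)\le x$; (3) for all $s\in S$, $x(s)<\infty$ implies $r(s)<\infty$ (inequalities pointwise). Then $\mathbb{E}^{\min}_s(\Diamond T)\le x(s)$ for all $s\in S$.
   Context: An MDP is a tuple $M=(S,\mathrm{Act},P)$ with $S$ finite, $\mathrm{Act}$ finite, $P\colon S\times\mathrm{Act}\times S\to[0,1]$ with $\sum_{s'}P(s,a,s')\in\{0,1\}$; $\mathrm{Act}(s)=\{a\mid\sum_{s'}P(s,a,s')=1\}$ is nonempty for all $s$; $\mathrm{Post}(s,a)=\{s'\mid P(s,a,s')>0\}$. A strategy is $\sigma\colon S\to\mathrm{Act}$ with $\sigma(s)\in\mathrm{Act}(s)$, inducing a Markov chain with transitions $P(s,\sigma(s),\cdot)$. For an infinite path $s_0s_1\ldots$, the accumulated reward is $\sum_{k=0}^{n-1}\mathrm{rew}(s_k)$ with $n=\min\{i\mid s_i\in T\}$ if $T$ is visited, and $\infty$ otherwise; $\mathbb{E}^\sigma_s(\Diamond T)$ is its expectation under $\sigma$ from $s$, and $\mathbb{E}^{\min}_s(\Diamond T)=\min_\sigma\mathbb{E}^\sigma_s(\Diamond T)$. $E^{\min}(x)(s)=0$ for $s\in T$ and $\mathrm{rew}(s)+\min_{a\in\mathrm{Act}(s)}\sum_{s'\in\mathrm{Post}(s,a)}P(s,a,s')x(s')$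 for $s\notin T$, with $p\cdot\infty=\infty$ for $p>0$, $a+\infty=\infty$. The $x$-decreasing actions of $s$ are $\mathrm{Act}^{\mathrm{rew}}_x(s)=\{a\in\mathrm{Act}(s)\mid x(s)\ge\mathrm{rew}(s)+\sum_{s'\in\mathrm{Post}(s,a)}P(s,a,s')x(s')\}$. $\mathbb{N}_\infty=\mathbb{N}\cup\{\infty\}$, $1+\infty=\infty$, minimum over the empty set is $\infty$. $D^{\min,\mathrm{rew}}_x(r)(s)=0$ for $s\in T$ and $1+\min_{a\in\mathrm{Act}^{\mathrm{rew}}_x(s)}\min_{s'\in\mathrm{Post}(s,a)}r(s')$ for $s\notin T$. *)

theory Defs
  imports Complex_Main "HOL-Library.Extended_Nat" "HOL-Library.Extended_Nonnegative_Real"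
begin

definition Act :: "('s::finite \<Rightarrow> 'a::finite \<Rightarrow> 's \<Rightarrow> real) \<Rightarrow> 's \<Rightarrow> 'a set" where
  "Act P s = {a. (\<Sum>s'\<in>UNIV. P s a s') = 1}"

definition Post :: "('s::finite \<Rightarrow> 'a::finite \<Rightarrow> 's \<Rightarrow> real) \<Rightarrow> 's \<Rightarrow> 'a \<Rightarrow> 's set" where
  "Post P s a = {s'. P s a s' > 0}"

definition is_MDP :: "('s::finite \<Rightarrow> 'a::finite \<Rightarrow> 's \<Rightarrow> real) \<Rightarrow> bool" where
  "is_MDP P \<longleftrightarrow> (\<forall>s a s'. 0 \<le> P s a s' \<and> P s a s' \<le> 1)
      \<and> (\<forall>s a. (\<Sum>s'\<in>UNIV. P s a s') \<in> {0, 1})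
      \<and> (\<forall>s. Act P s \<noteq> {})"

definition strategy :: "('s::finite \<Rightarrow> 'a::finite \<Rightarrow> 's \<Rightarrow> real) \<Rightarrow> ('s \<Rightarrow> 'a) \<Rightarrow> bool" where
  "strategy P \<sigma> \<longleftrightarrow> (\<forall>s. \<sigma> s \<in> Act P s)"

fun reach_within :: "('s::finite \<Rightarrow> 'a::finite \<Rightarrow> 's \<Rightarrow> real) \<Rightarrow> ('s \<Rightarrow> 'a) \<Rightarrow> 's set
    \<Rightarrow> nat \<Rightarrow> 's \<Rightarrow> ennreal" where
  "reach_within P \<sigma> T 0 s = (if s \<in> T then 1 else 0)"
| "reach_within P \<sigma> T (Suc n) s = (if s \<in> T then 1 else
      (\<Sum>s'\<in>UNIV. ennreal (P s (\<sigma> s) s') * reach_within P \<sigma> T n s'))"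

text \<open>Expected reward accumulated in the first n steps before visiting T
  (i.e. expectation of \<Sum>_{k < min n (first visit of T)} rew(s_k)).\<close>
fun acc_within :: "('s::finite \<Rightarrow> 'a::finite \<Rightarrow> 's \<Rightarrow> real) \<Rightarrow> ('s \<Rightarrow> 'a) \<Rightarrow> ('s \<Rightarrow> real)
    \<Rightarrow> 's set \<Rightarrow> nat \<Rightarrow> 's \<Rightarrow> ennreal" where
  "acc_within P \<sigma> rew T 0 s = 0"
| "acc_within P \<sigma> rew T (Suc n) s = (if s \<in> T then 0 else
      ennreal (rew s) + (\<Sum>s'\<in>UNIV. ennreal (P s (\<sigma> s) s') * acc_within P \<sigma> rew T n s'))"

text \<open>Expected accumulated reward until T: the random variable is the accumulated
  reward if T is visited and \<infinity> otherwise. Hence the expectation is \<infinity> if T is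
  missed with positive probability, and otherwise (monotone convergence) the limit
  of the expected truncated accumulated rewards.\<close>
definition exp_rew :: "('s::finite \<Rightarrow> 'a::finite \<Rightarrow> 's \<Rightarrow> real) \<Rightarrow> ('s \<Rightarrow> 'a) \<Rightarrow> ('s \<Rightarrow> real)
    \<Rightarrow> 's set \<Rightarrow> 's \<Rightarrow> ennreal" where
  "exp_rew P \<sigma> rew T s =
     (if (SUP n. reach_within P \<sigma> T n s) < 1 then \<infinity>
      else (SUP n. acc_within P \<sigma> rew T n s))"

definition exp_rew_min :: "('s::finite \<Rightarrow> 'a::finite \<Rightarrow> 's \<Rightarrow> real) \<Rightarrow> ('s \<Rightarrow> real)
    \<Rightarrow> 's set \<Rightarrow> 's \<Rightarrow> ennreal" where
  "exp_rew_min P rew T s = (INF \<sigma>\<in>{\<sigma>. strategy P \<sigma>}. exp_rew P \<sigma> rew T s)"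

text \<open>The Bellman operator E^min (ennreal arithmetic gives p*\<infinity>=\<infinity> for p>0).\<close>
definition Emin_op :: "('s::finite \<Rightarrow> 'a::finite \<Rightarrow> 's \<Rightarrow> real) \<Rightarrow> ('s \<Rightarrow> real) \<Rightarrow> 's set
    \<Rightarrow> ('s \<Rightarrow> ennreal) \<Rightarrow> 's \<Rightarrow> ennreal" where
  "Emin_op P rew T x s = (if s \<in> T then 0 else
     ennreal (rew s) + (INF a\<in>Act P s. \<Sum>s'\<in>Post P s a. ennreal (P s a s') * x s'))"

definition Act_dec :: "('s::finite \<Rightarrow> 'a::finite \<Rightarrow> 's \<Rightarrow> real) \<Rightarrow> ('s \<Rightarrow> real)
    \<Rightarrow> ('s \<Rightarrow> ennreal) \<Rightarrow> 's \<Rightarrow> 'a set" where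
  "Act_dec P rew x s = {a \<in> Act P s.
     x s \<ge> ennreal (rew s) + (\<Sum>s'\<in>Post P s a. ennreal (P s a s') * x s')}"

text \<open>The operator D^{min,rew}_x on N_\<infinity>-valued functions (Inf {} = \<infinity> in enat).\<close>
definition Dmin_op :: "('s::finite \<Rightarrow> 'a::finite \<Rightarrow> 's \<Rightarrow> real) \<Rightarrow> ('s \<Rightarrow> real) \<Rightarrow> 's set
    \<Rightarrow> ('s \<Rightarrow> ennreal) \<Rightarrow> ('s \<Rightarrow> enat) \<Rightarrow> 's \<Rightarrow> enat" where
  "Dmin_op P rew T x r s = (if s \<in> T then 0 else
     1 + (INF a\<in>Act_dec P rew x s. INF s'\<in>Post P s a. r s'))"

end

theory Submission
  imports Defs
begin

text \<open>Pick a strategy \<sigma> that, in every state s \<notin> T with x s < \<infinity>, plays an x-decreasing action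
  having a successor of smaller rank r; such an action exists because D(r) \<le> r and r s < \<infinity>.
  Since x is superharmonic along \<sigma>, every truncated expected reward is bounded by x.
  The finite part F of x is closed under \<sigma>, and on F the reachability probability R of T is
  almost sure: among the states of F where R attains its minimum m, take one of least rank.
  If m < 1 it lies outside T, all its successors are in F, and one of them has smaller rank and
  hence R-value above m, so the average of R over its successors, which is at most m, exceeds m.\<close>

definition reach_prob :: "('s::finite \<Rightarrow> 'a::finite \<Rightarrow> 's \<Rightarrow> real) \<Rightarrow> ('s \<Rightarrow> 'a) \<Rightarrow> 's set
    \<Rightarrow> 's \<Rightarrow> ennreal" where
  "reach_prob P \<sigma> T s = (SUP n. reach_within P \<sigma> T n s)"

lemma sum_UNIV_eq_sum_Post:
  assumes "\<forall>s a s'. 0 \<le> P s a s'"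
  shows "(\<Sum>s'\<in>UNIV. ennreal (P s a s') * f s') = (\<Sum>s'\<in>Post P s a. ennreal (P s a s') * f s')"
  by (rule sum.mono_neutral_right) (use assms in \<open>auto simp: Post_def ennreal_eq_0_iff\<close>)

lemma incseq_reach_within:
  assumes "\<forall>s a s'. 0 \<le> P s a s'"
  shows "incseq (\<lambda>n. reach_within P \<sigma> T n s)"
proof (rule incseq_SucI)
  show "reach_within P \<sigma> T n s \<le> reach_within P \<sigma> T (Suc n) s" for n
    by (induction n arbitrary: s) (simp_all add: sum_mono mult_left_mono)
qed

lemma reach_prob_target:
  assumes "s \<in> T"
  shows "reach_prob P \<sigma> T s = 1"
proof -
  have "reach_within P \<sigma> T n s = 1" for n
    using assms by (cases n) simp_all
  then show ?thesis
    by (simp add: reach_prob_def)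
qed

lemma reach_prob_superharmonic:
  assumes "\<forall>s a s'. 0 \<le> P s a s'" and "s \<notin> T"
  shows "(\<Sum>s'\<in>UNIV. ennreal (P s (\<sigma> s) s') * reach_prob P \<sigma> T s') \<le> reach_prob P \<sigma> T s"
proof -
  have "(\<Sum>s'\<in>UNIV. ennreal (P s (\<sigma> s) s') * reach_prob P \<sigma> T s')
      = (\<Sum>s'\<in>UNIV. SUP n. ennreal (P s (\<sigma> s) s') * reach_within P \<sigma> T n s')"
    by (simp add: reach_prob_def SUP_mult_left_ennreal)
  also have "\<dots> = (SUP n. \<Sum>s'\<in>UNIV. ennreal (P s (\<sigma> s) s') * reach_within P \<sigma> T n s')"
    by (rule ennreal_SUP_sum[symmetric])
       (use incseq_reach_within[OF assms(1)] in \<open>auto simp: incseq_def mult_left_mono\<close>)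
  also have "\<dots> = (SUP n. reach_within P \<sigma> T (Suc n) s)"
    using assms(2) by simp
  also have "\<dots> \<le> reach_prob P \<sigma> T s"
    unfolding reach_prob_def by (meson SUP_least SUP_upper UNIV_I)
  finally show ?thesis .
qed

lemma ennreal_less_weighted_sum:
  fixes p :: "'u::finite \<Rightarrow> real" and f :: "'u \<Rightarrow> ennreal"
  assumes "\<forall>u. 0 \<le> p u" and "(\<Sum>u\<in>UNIV. p u) = 1"
    and "\<forall>u. 0 < p u \<longrightarrow> m \<le> f u" and "0 < p u0" and "m < f u0" and "m < \<infinity>"
  shows "m < (\<Sum>u\<in>UNIV. ennreal (p u) * f u)"
proof -
  define U where "U = UNIV - {u0}"
  have split: "(\<Sum>u\<in>UNIV. g u) = g u0 + (\<Sum>u\<in>U. g u)" for g :: "'u \<Rightarrow> ennreal"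
    unfolding U_def by (simp add: sum.remove)
  have "(\<Sum>u\<in>UNIV. ennreal (p u) * m) = (\<Sum>u\<in>UNIV. ennreal (p u)) * m"
    by (simp add: sum_distrib_right)
  also have "\<dots> = ennreal (\<Sum>u\<in>UNIV. p u) * m"
    using assms(1) by (simp add: sum_ennreal)
  finally have "(\<Sum>u\<in>UNIV. ennreal (p u) * m) = ennreal (\<Sum>u\<in>UNIV. p u) * m" .
  then have m_eq: "m = (\<Sum>u\<in>U. ennreal (p u) * m) + ennreal (p u0) * m"
    using assms(2) split[of "\<lambda>u. ennreal (p u) * m"] by (simp add: add.commute)
  have rest_finite: "(\<Sum>u\<in>U. ennreal (p u) * m) \<noteq> \<infinity>"
    using assms(6) by (auto simp: ennreal_mult_eq_top_iff)
  have rest_le: "(\<Sum>u\<in>U. ennreal (p u) * m) \<le> (\<Sum>u\<in>U. ennreal (p u) * f u)"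
    using assms(1,3)
    by (intro sum_mono) (metis ennreal_eq_0_iff less_eq_real_def mult_left_mono mult_zero_left zero_le)
  have "ennreal (p u0) * m < ennreal (p u0) * f u0"
    by (rule ennreal_mult_strict_left_mono) (use assms in auto)
  then have "(\<Sum>u\<in>U. ennreal (p u) * m) + ennreal (p u0) * m
      < (\<Sum>u\<in>U. ennreal (p u) * m) + ennreal (p u0) * f u0"
    using rest_finite by (simp add: ennreal_add_left_cancel_less)
  also have "\<dots> \<le> (\<Sum>u\<in>U. ennreal (p u) * f u) + ennreal (p u0) * f u0"
    using rest_le by (rule add_right_mono)
  finally show ?thesis
    using m_eq split[of "\<lambda>u. ennreal (p u) * f u"] by (simp add: add.commute)
qed

lemma acc_within_le_decreasing:
  assumes "\<forall>s a s'. 0 \<le> P s a s'"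
    and "\<forall>s. s \<notin> T \<and> x s < \<infinity> \<longrightarrow> \<sigma> s \<in> Act_dec P rew x s"
  shows "acc_within P \<sigma> rew T n s \<le> x s"
proof (induction n arbitrary: s)
  case 0
  then show ?case by simp
next
  case (Suc n)
  show ?case
  proof (cases "s \<notin> T \<and> x s < \<infinity>")
    case True
    have "acc_within P \<sigma> rew T (Suc n) s
        = ennreal (rew s) + (\<Sum>s'\<in>UNIV. ennreal (P s (\<sigma> s) s') * acc_within P \<sigma> rew T n s')"
      using True by simp
    also have "\<dots> \<le> ennreal (rew s) + (\<Sum>s'\<in>UNIV. ennreal (P s (\<sigma> s) s') * x s')"
      using Suc.IH by (intro add_left_mono sum_mono mult_left_mono) auto
    also have "\<dots> \<le> x s"
      using True assms by (simp add: sum_UNIV_eq_sum_Post Act_dec_def)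
    finally show ?thesis .
  qed (auto simp: top_unique not_less)
qed

lemma Act_dec_Post_finite:
  assumes "a \<in> Act_dec P rew x s" and "x s < \<infinity>" and "s' \<in> Post P s a"
  shows "x s' < \<infinity>"
proof -
  have "ennreal (P s a s') * x s' \<le> (\<Sum>s'\<in>Post P s a. ennreal (P s a s') * x s')"
    by (rule member_le_sum) (use assms(3) in auto)
  also have "\<dots> \<le> x s"
    using assms(1) unfolding Act_dec_def by (auto intro: order_trans[rotated])
  finally have "ennreal (P s a s') * x s' < \<infinity>"
    using assms(2) by simp
  moreover have "ennreal (P s a s') \<noteq> 0"
    using assms(3) by (simp add: Post_def)
  ultimately show ?thesis
    by (auto simp: ennreal_mult_eq_top_iff less_top[symmetric])
qed

lemma exists_rank_decreasing_action:
  assumes "Dmin_op P rew T x r s \<le> r s" and "s \<notin> T" and "r s < \<infinity>"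
  shows "\<exists>a\<in>Act_dec P rew x s. \<exists>s'\<in>Post P s a. r s' < r s"
proof (rule ccontr)
  assume "\<not> ?thesis"
  then have "r s \<le> (INF a\<in>Act_dec P rew x s. INF s'\<in>Post P s a. r s')"
    by (auto simp: le_INF_iff not_less)
  then have "1 + r s \<le> Dmin_op P rew T x r s"
    using assms(2) unfolding Dmin_op_def by (simp add: add_left_mono)
  also have "\<dots> \<le> r s"
    by (rule assms(1))
  finally show False
    using assms(3)
    by (cases "r s") (auto simp: one_enat_def)
qed

lemma reach_prob_one_if_ranked:
  fixes rk :: "'s::finite \<Rightarrow> 'b::linorder"
  assumes nonneg: "\<forall>s a s'. 0 \<le> P s a s'"
    and stochastic: "\<forall>s\<in>F. s \<notin> T \<longrightarrow> (\<Sum>s'\<in>UNIV. P s (\<sigma> s) s') = 1"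
    and closed: "\<forall>s\<in>F. s \<notin> T \<longrightarrow> Post P s (\<sigma> s) \<subseteq> F"
    and ranked: "\<forall>s\<in>F. s \<notin> T \<longrightarrow> (\<exists>s'\<in>Post P s (\<sigma> s). rk s' < rk s)"
    and "s \<in> F"
  shows "1 \<le> reach_prob P \<sigma> T s"
proof (rule ccontr)
  let ?R = "reach_prob P \<sigma> T"
  define m where "m = Min (?R ` F)"
  have m_le: "m \<le> ?R u" if "u \<in> F" for u
    unfolding m_def using that by simp
  assume "\<not> 1 \<le> ?R s"
  then have "m < 1"
    using m_le[OF \<open>s \<in> F\<close>] by simp
  define A where "A = {u\<in>F. ?R u = m}"
  have "m \<in> ?R ` F"
    unfolding m_def using \<open>s \<in> F\<close> by (intro Min_in) auto
  then have "A \<noteq> {}"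
    unfolding A_def by auto
  then have "Min (rk ` A) \<in> rk ` A"
    by (intro Min_in) auto
  then obtain s0 where "s0 \<in> A" and "rk s0 = Min (rk ` A)"
    by auto
  have s0_least: "rk s0 \<le> rk u" if "u \<in> A" for u
    using that \<open>rk s0 = Min (rk ` A)\<close> by simp
  have "s0 \<in> F" and R_s0: "?R s0 = m"
    using \<open>s0 \<in> A\<close> unfolding A_def by auto
  have "s0 \<notin> T"
  proof
    assume "s0 \<in> T"
    then have "?R s0 = 1"
      by (rule reach_prob_target)
    with R_s0 \<open>m < 1\<close> show False
      by simp
  qed
  obtain s1 where s1_Post: "s1 \<in> Post P s0 (\<sigma> s0)" and "rk s1 < rk s0"
    using ranked \<open>s0 \<in> F\<close> \<open>s0 \<notin> T\<close> by blast
  have Post_F: "Post P s0 (\<sigma> s0) \<subseteq> F"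
    using closed \<open>s0 \<in> F\<close> \<open>s0 \<notin> T\<close> by blast
  have "s1 \<in> F"
    using Post_F s1_Post by blast
  have "s1 \<notin> A"
  proof
    assume "s1 \<in> A"
    then have "rk s0 \<le> rk s1"
      by (rule s0_least)
    with \<open>rk s1 < rk s0\<close> show False
      by simp
  qed
  with \<open>s1 \<in> F\<close> have "?R s1 \<noteq> m"
    unfolding A_def by blast
  then have "m < ?R s1"
    using m_le[OF \<open>s1 \<in> F\<close>] by (simp add: le_neq_trans)
  have "m < (\<Sum>u\<in>UNIV. ennreal (P s0 (\<sigma> s0) u) * ?R u)"
  proof (rule ennreal_less_weighted_sum)
    show "\<forall>u. 0 \<le> P s0 (\<sigma> s0) u"
      using nonneg by blast
    show "(\<Sum>u\<in>UNIV. P s0 (\<sigma> s0) u) = 1"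
      using stochastic \<open>s0 \<in> F\<close> \<open>s0 \<notin> T\<close> by blast
    show "\<forall>u. 0 < P s0 (\<sigma> s0) u \<longrightarrow> m \<le> ?R u"
      using Post_F m_le by (auto simp: Post_def)
    show "0 < P s0 (\<sigma> s0) s1"
      using s1_Post by (simp add: Post_def)
    show "m < ?R s1" by fact
    show "m < \<infinity>"
      using \<open>m < 1\<close> by (auto simp: less_top[symmetric])
  qed
  also have "\<dots> \<le> ?R s0"
    by (rule reach_prob_superharmonic[OF nonneg \<open>s0 \<notin> T\<close>])
  finally show False
    using R_s0 by simp
qed

lemma exists_ranked_strategy:
  assumes "is_MDP P"
    and "\<forall>s. Dmin_op P rew T x r s \<le> r s"
    and "\<forall>s. x s < \<infinity> \<longrightarrow> r s < \<infinity>"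
  obtains \<sigma> where "strategy P \<sigma>"
    and "\<forall>s. s \<notin> T \<and> x s < \<infinity> \<longrightarrow> \<sigma> s \<in> Act_dec P rew x s \<and> (\<exists>s'\<in>Post P s (\<sigma> s). r s' < r s)"
proof -
  have "\<exists>a. a \<in> Act P s \<and>
      (s \<notin> T \<and> x s < \<infinity> \<longrightarrow> a \<in> Act_dec P rew x s \<and> (\<exists>s'\<in>Post P s a. r s' < r s))" for s
  proof (cases "s \<notin> T \<and> x s < \<infinity>")
    case True
    then show ?thesis
      using exists_rank_decreasing_action[of P rew T x r s] assms(2,3)
      by (auto simp: Act_dec_def)
  next
    case False
    then show ?thesis
      using assms(1) by (auto simp: is_MDP_def)
  qed
  then show ?thesis
    using that unfolding strategy_def by metis
qed

theorem proposition9: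
  fixes P :: "'s::finite \<Rightarrow> 'a::finite \<Rightarrow> 's \<Rightarrow> real"
    and T :: "'s set" and rew :: "'s \<Rightarrow> real"
    and x :: "'s \<Rightarrow> ennreal" and r :: "'s \<Rightarrow> enat"
  assumes "is_MDP P"
    and "\<forall>s. rew s \<ge> 0"
    and "\<forall>s. Dmin_op P rew T x r s \<le> r s"
    and "\<forall>s. Emin_op P rew T x s \<le> x s"
    and "\<forall>s. x s < \<infinity> \<longrightarrow> r s < \<infinity>"
  shows "\<forall>s. exp_rew_min P rew T s \<le> x s"
proof
  fix s
  have nonneg: "\<forall>s a s'. 0 \<le> P s a s'"
    using assms(1) by (simp add: is_MDP_def)
  obtain \<sigma> where "strategy P \<sigma>" and \<sigma>:
    "\<forall>s. s \<notin> T \<and> x s < \<infinity> \<longrightarrow> \<sigma> s \<in> Act_dec P rew x s \<and> (\<exists>s'\<in>Post P s (\<sigma> s). r s' < r s)"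
    using exists_ranked_strategy[OF assms(1,3,5)] by blast
  have "exp_rew P \<sigma> rew T s \<le> x s"
  proof (cases "x s < \<infinity>")
    case True
    have "1 \<le> reach_prob P \<sigma> T s"
    proof (rule reach_prob_one_if_ranked[where F = "{s. x s < \<infinity>}" and rk = r])
      show "\<forall>s\<in>{s. x s < \<infinity>}. s \<notin> T \<longrightarrow> Post P s (\<sigma> s) \<subseteq> {s. x s < \<infinity>}"
        using \<sigma> Act_dec_Post_finite by blast
    qed (use nonneg \<sigma> \<open>strategy P \<sigma>\<close> True in \<open>simp_all add: strategy_def Act_def\<close>)
    then have "exp_rew P \<sigma> rew T s = (SUP n. acc_within P \<sigma> rew T n s)"
      by (simp add: exp_rew_def reach_prob_def not_less[symmetric])
    also have "\<dots> \<le> x s"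
      using \<sigma> by (intro SUP_least acc_within_le_decreasing[OF nonneg]) blast
    finally show ?thesis .
  qed (simp add: top_unique not_less)
  moreover have "exp_rew_min P rew T s \<le> exp_rew P \<sigma> rew T s"
    unfolding exp_rew_min_def using \<open>strategy P \<sigma>\<close> by (intro INF_lower) simp
  ultimately show "exp_rew_min P rew T s \<le> x s"
    by simp
qed

end
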